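(* Let $G$ be a connected graph with node set $V$, $n=|V|$, and let $r$ be a ranking of $V$. Let $f$ be a function such that $f(v,\ell)$ can be evaluated for any $v\in V$ and $\ell\le e(v)$. If $f(v,\cdot)$ is non-decreasing for all $v\in V$, i.e., $f(v,\ell)\le f(v,\ell')$ for $\ell\le\ell'$, then the minimum eccentricity selection procedure described below returns a node $u$ such that $f(u,e(u))$ is minimal over all nodes, and updates the lower certificate $L$ so that $e_L(u)=e(u)$ and $f(v,e_L(v))\ge f(u,e(u))$ for all $v\in V$. Moreover, $k$ successive computations of a node minimizing $f(u,e(u))$ with this procedure use $k+2|L'|$ one-to-all distance queries and $(k+2|L'|)n$ evaluations of $f$, where $L'\subseteq \{\mathrm{antipode}_r(v): v\in V\}$ denotes the set of nodes added to $L$.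
   Context: For nodes $u,v$, $d(u,v)$ is the shortest-path distance and $e(u)=\max_{v\in V} d(u,v)$ is the eccentricity of $u$. Given a ranking $r$ of the nodes, the antipode $\mathrm{antipode}_r(u)$ of $u$ is its furthest node of highest rank, i.e., $\mathrm{antipode}_r(u)=\arg\max_{v\in V}(d(u,v),r(v))$ with pairs compared lexicographically. A one-to-all distance query from $u$ (e.g., a BFS) returns $d(u,v)$ for all $v\in V$, from which $e(u)$ and $\mathrm{antipode}_r(u)$ are obtained. For a set $L$ of nodes (a lower certificate), $e_L(v)=\max_{x\in L} d(v,x)$ (equal to $0$ when $L=\emptyset$), so that $e_L(v)\le e(v)$. The minimum eccentricity selection procedure for $f$ maintains a set $L$ (initially empty) together with the values $e_L(v)$ for all $v\in V$, and, when called, repeats the following: pick $u=\arg\min_{v\in V} f(v,e_L(v))$; perform a one-to-all distance query from $u$ to obtain $e(u)$; if $e_L(u)=e(u)$, return $u$; otherwise let $a=\mathrm{antipode}_r(u)$, perform a one-to-all distance query from $a$, add $a$ to $L$, and update $e_L(v):=\max(e_L(v),d(a,v))$ for all $v\in V$. *)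

theory Defs
  imports Main
begin

definition dist :: "('a \<Rightarrow> 'a \<Rightarrow> bool) \<Rightarrow> 'a \<Rightarrow> 'a \<Rightarrow> nat" where
  "dist E u v = (LEAST n. (E ^^ n) u v)"

definition ecc :: "'a set \<Rightarrow> ('a \<Rightarrow> 'a \<Rightarrow> bool) \<Rightarrow> 'a \<Rightarrow> nat" where
  "ecc V E u = Max ((dist E u) ` V)"

definition eL :: "('a \<Rightarrow> 'a \<Rightarrow> bool) \<Rightarrow> 'a set \<Rightarrow> 'a \<Rightarrow> nat" where
  "eL E L v = Max (insert 0 ((dist E v) ` L))"

text \<open>Furthest node of highest rank (lexicographic comparison of (d(u,v), r(v))).\<close>
definition antipode :: "'a set \<Rightarrow> ('a \<Rightarrow> 'a \<Rightarrow> bool) \<Rightarrow> ('a \<Rightarrow> nat) \<Rightarrow> 'a \<Rightarrow> 'a" where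
  "antipode V E r u = (THE v. v \<in> V \<and> (\<forall>w\<in>V. dist E u w < dist E u v \<or>
                         (dist E u w = dist E u v \<and> r w \<le> r v)))"

definition is_argmin :: "'a set \<Rightarrow> ('a \<Rightarrow> 'a \<Rightarrow> bool) \<Rightarrow> ('a \<Rightarrow> nat \<Rightarrow> 'b::linorder) \<Rightarrow> 'a set \<Rightarrow> 'a \<Rightarrow> bool" where
  "is_argmin V E f L u \<longleftrightarrow> u \<in> V \<and> (\<forall>v\<in>V. f u (eL E L u) \<le> f v (eL E L v))"

text \<open>One call of the minimum eccentricity selection procedure (nondeterministic in the
  tie-breaking of the argmin).  msel V E r f L u L' q c: started with certificate L, the call
  returns u, leaves certificate L', and uses q one-to-all distance queries and c evaluations
  of f (each argmin over V costs card V evaluations).\<close>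
inductive msel :: "'a set \<Rightarrow> ('a \<Rightarrow> 'a \<Rightarrow> bool) \<Rightarrow> ('a \<Rightarrow> nat) \<Rightarrow> ('a \<Rightarrow> nat \<Rightarrow> 'b::linorder)
    \<Rightarrow> 'a set \<Rightarrow> 'a \<Rightarrow> 'a set \<Rightarrow> nat \<Rightarrow> nat \<Rightarrow> bool"
  for V E r f where
  ret: "is_argmin V E f L u \<Longrightarrow> eL E L u = ecc V E u \<Longrightarrow> msel V E r f L u L 1 (card V)"
| step: "is_argmin V E f L u \<Longrightarrow> eL E L u \<noteq> ecc V E u \<Longrightarrow>
    msel V E r f (insert (antipode V E r u) L) u' L' q c \<Longrightarrow>
    msel V E r f L u' L' (q + 2) (c + card V)"

inductive msel_seq :: "'a set \<Rightarrow> ('a \<Rightarrow> 'a \<Rightarrow> bool) \<Rightarrow> ('a \<Rightarrow> nat) \<Rightarrow> ('a \<Rightarrow> nat \<Rightarrow> 'b::linorder)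
    \<Rightarrow> 'a set \<Rightarrow> nat \<Rightarrow> 'a set \<Rightarrow> nat \<Rightarrow> nat \<Rightarrow> bool"
  for V E r f where
  nil: "msel_seq V E r f L 0 L 0 0"
| cons: "msel V E r f L u L1 q1 c1 \<Longrightarrow> msel_seq V E r f L1 k L2 q2 c2 \<Longrightarrow>
    msel_seq V E r f L (Suc k) L2 (q1 + q2) (c1 + c2)"

end

theory Submission
  imports Defs "HOL-Library.Product_Lexorder"
begin

(* Every certificate value is a lower bound, e_L(v) \<le> e(v), so by monotonicity f(v, e_L(v))
   \<le> f(v, e(v)). Hence a minimiser u of f(v, e_L(v)) whose bound is tight, e_L(u) = e(u),
   minimises f(v, e(v)) as well. If the bound is not tight, the antipode of u realises e(u),
   so it is not yet in L; adding it makes the bound of u tight. Each such round grows L by a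
   new antipode, which bounds the number of rounds and yields the cost count. *)

lemma antipode_furthest:
  assumes "finite V" "V \<noteq> {}" "inj_on r V"
  shows "antipode V E r u \<in> V" "\<And>w. w \<in> V \<Longrightarrow> dist E u w \<le> dist E u (antipode V E r u)"
proof -
  \<comment> \<open>Since r is injective on V, the lexicographic key has a unique maximiser on V,
    which is therefore the element described by THE.\<close>
  define key where "key v = (dist E u v, r v)" for v
  define P where "P v \<longleftrightarrow> v \<in> V \<and> (\<forall>w\<in>V. dist E u w < dist E u v \<or>
                         (dist E u w = dist E u v \<and> r w \<le> r v))" for v
  have P_iff: "P v \<longleftrightarrow> v \<in> V \<and> (\<forall>w\<in>V. key w \<le> key v)" for v
    unfolding P_def key_def by auto
  have "Max (key ` V) \<in> key ` V"
    using assms(1,2) by simp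
  then obtain v where v: "v \<in> V" "key v = Max (key ` V)"
    by (metis imageE)
  have "P v"
    using v assms(1) by (simp add: P_iff)
  moreover have "x = v" if "P x" for x
  proof -
    have "key x = key v"
      using that \<open>P v\<close> by (simp add: P_iff order_antisym)
    then show ?thesis
      using that v assms(3) by (auto simp: P_iff key_def inj_on_def)
  qed
  ultimately have "antipode V E r u = v"
    unfolding antipode_def P_def[symmetric] by (rule the_equality)
  with \<open>P v\<close> show "antipode V E r u \<in> V" "\<And>w. w \<in> V \<Longrightarrow> dist E u w \<le> dist E u (antipode V E r u)"
    unfolding P_def by auto
qed

lemma dist_antipode_eq_ecc:
  assumes "finite V" "V \<noteq> {}" "inj_on r V"
  shows "dist E u (antipode V E r u) = ecc V E u"
  unfolding ecc_def using antipode_furthest[OF assms] assms(1)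
  by (intro Max_eqI[symmetric]) auto

lemma dist_le_eL:
  assumes "finite L" "x \<in> L"
  shows "dist E v x \<le> eL E L v"
  unfolding eL_def using assms by simp

lemma eL_le_ecc:
  assumes "finite V" "L \<subseteq> V"
  shows "eL E L v \<le> ecc V E v"
proof (cases "L = {}")
  case False
  with assms have "finite L" "V \<noteq> {}"
    using finite_subset by auto
  with assms show ?thesis
    unfolding eL_def ecc_def by (auto simp: Max_le_iff intro!: Max_ge_iff[THEN iffD2])
qed (simp add: eL_def)

lemma antipode_notin_certificate:
  assumes "finite V" "V \<noteq> {}" "inj_on r V" "L \<subseteq> V" "eL E L u \<noteq> ecc V E u"
  shows "antipode V E r u \<notin> L"
proof
  assume "antipode V E r u \<in> L"
  then have "ecc V E u \<le> eL E L u"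
    using dist_le_eL[of L] dist_antipode_eq_ecc[OF assms(1-3)] assms(1,4) finite_subset
    by metis
  with eL_le_ecc[OF assms(1,4)] assms(5) show False
    by (simp add: le_antisym)
qed

lemma tight_argmin_minimises:
  assumes "finite V" "L \<subseteq> V" "is_argmin V E f L u" "eL E L u = ecc V E u"
    and mono: "\<And>v l l'. v \<in> V \<Longrightarrow> l \<le> l' \<Longrightarrow> l' \<le> ecc V E v \<Longrightarrow> f v l \<le> f v l'"
  shows "\<forall>v\<in>V. f u (ecc V E u) \<le> f v (eL E L v)" "\<forall>v\<in>V. f u (ecc V E u) \<le> f v (ecc V E v)"
proof -
  show lower: "\<forall>v\<in>V. f u (ecc V E u) \<le> f v (eL E L v)"
    using assms(3,4) unfolding is_argmin_def by metis
  show "\<forall>v\<in>V. f u (ecc V E u) \<le> f v (ecc V E v)"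
    using lower mono[OF _ eL_le_ecc[OF assms(1,2)] order_refl] order_trans by blast
qed

lemma msel_returns_tight_argmin:
  "msel V E r f L u L' q c \<Longrightarrow> u \<in> V \<and> is_argmin V E f L' u \<and> eL E L' u = ecc V E u"
  by (induction rule: msel.induct) (auto simp: is_argmin_def)

context
  fixes V :: "'a set" and E :: "'a \<Rightarrow> 'a \<Rightarrow> bool" and r :: "'a \<Rightarrow> nat"
  assumes finV: "finite V" and neV: "V \<noteq> {}" and rank: "inj_on r V"
begin

lemma msel_exists:
  assumes "L \<subseteq> V"
  shows "\<exists>u L' q c. msel V E r f L u L' q c"
  using assms
proof (induction "card V - card L" arbitrary: L rule: less_induct)
  case less
  obtain u where "u \<in> V" "\<forall>v\<in>V. f u (eL E L u) \<le> f v (eL E L v)"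
    using arg_min_if_finite[OF finV neV, of "\<lambda>v. f v (eL E L v)"] by (meson not_le)
  then have argmin: "is_argmin V E f L u"
    unfolding is_argmin_def by blast
  show ?case
  proof (cases "eL E L u = ecc V E u")
    case True
    then show ?thesis using msel.ret[OF argmin] by blast
  next
    case False
    let ?a = "antipode V E r u"
    have "?a \<in> V" "?a \<notin> L"
      using antipode_furthest(1)[OF finV neV rank] antipode_notin_certificate[OF finV neV rank less.prems False]
      by auto
    moreover have "finite L"
      using less.prems finV finite_subset by blast
    ultimately have "card L < card (insert ?a L)"
      by simp
    moreover have "card (insert ?a L) \<le> card V"
      using card_mono[OF finV] less.prems \<open>?a \<in> V\<close> by simp
    ultimately have "card V - card (insert ?a L) < card V - card L"
      by linarith
    then obtain u' L' q c where "msel V E r f (insert ?a L) u' L' q c"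
      using less.hyps less.prems \<open>?a \<in> V\<close> by blast
    then show ?thesis using msel.step[OF argmin False] by blast
  qed
qed

lemma msel_certificate_growth:
  "msel V E r f L u L' q c \<Longrightarrow> L \<subseteq> V \<Longrightarrow>
     L \<subseteq> L' \<and> L' \<subseteq> V \<and> L' - L \<subseteq> antipode V E r ` V \<and>
     q = 1 + 2 * card (L' - L) \<and> c = (1 + card (L' - L)) * card V"
proof (induction rule: msel.induct)
  case (ret L u)
  then show ?case by simp
next
  case (step L u u' L' q c)
  let ?a = "antipode V E r u"
  have "u \<in> V" "?a \<in> V" "?a \<notin> L"
    using step.hyps(1) antipode_furthest(1)[OF finV neV rank]
      antipode_notin_certificate[OF finV neV rank step.prems step.hyps(2)]
    by (auto simp: is_argmin_def)
  with step.prems have "insert ?a L \<subseteq> V"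
    by simp
  from step.IH[OF this] have IH: "insert ?a L \<subseteq> L'" "L' \<subseteq> V" "L' - insert ?a L \<subseteq> antipode V E r ` V"
    "q = 1 + 2 * card (L' - insert ?a L)" "c = (1 + card (L' - insert ?a L)) * card V"
    by simp_all
  have new: "L' - L = insert ?a (L' - insert ?a L)"
    using IH(1) \<open>?a \<notin> L\<close> by blast
  have "finite L'"
    using IH(2) finV finite_subset by blast
  then have "card (L' - L) = Suc (card (L' - insert ?a L))"
    by (subst new) simp
  moreover have "L' - L \<subseteq> antipode V E r ` V"
    using new IH(3) \<open>u \<in> V\<close> by blast
  moreover have "L \<subseteq> L'"
    using IH(1) by blast
  ultimately show ?case
    using IH(2,4,5) by simp
qed

lemma msel_seq_cost:
  "msel_seq V E r f L k L' q c \<Longrightarrow> L \<subseteq> V \<Longrightarrow>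
     L \<subseteq> L' \<and> L' \<subseteq> V \<and> L' - L \<subseteq> antipode V E r ` V \<and>
     q = k + 2 * card (L' - L) \<and> c = (k + card (L' - L)) * card V"
proof (induction rule: msel_seq.induct)
  case (nil L)
  then show ?case by simp
next
  case (cons L u L1 q1 c1 k L2 q2 c2)
  have first: "L \<subseteq> L1" "L1 \<subseteq> V" "L1 - L \<subseteq> antipode V E r ` V"
    "q1 = 1 + 2 * card (L1 - L)" "c1 = (1 + card (L1 - L)) * card V"
    using msel_certificate_growth[OF cons.hyps(1) cons.prems] by auto
  have rest: "L1 \<subseteq> L2" "L2 \<subseteq> V" "L2 - L1 \<subseteq> antipode V E r ` V"
    "q2 = k + 2 * card (L2 - L1)" "c2 = (k + card (L2 - L1)) * card V"
    using cons.IH first(2) by auto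
  have "finite L1" "finite L2"
    using first(2) rest(2) finV finite_subset by auto
  moreover have "L2 - L = (L1 - L) \<union> (L2 - L1)"
    using first(1) rest(1) by blast
  moreover have "card ((L1 - L) \<union> (L2 - L1)) = card (L1 - L) + card (L2 - L1)"
    using \<open>finite L1\<close> \<open>finite L2\<close> by (intro card_Un_disjoint) auto
  ultimately have "card (L2 - L) = card (L1 - L) + card (L2 - L1)"
    by simp
  with first rest show ?case
    by (auto simp: algebra_simps)
qed

end

theorem proposition1:
  fixes V :: "'a set" and E :: "'a \<Rightarrow> 'a \<Rightarrow> bool" and r :: "'a \<Rightarrow> nat"
    and f :: "'a \<Rightarrow> nat \<Rightarrow> 'b::linorder"
  assumes finV: "finite V" and neV: "V \<noteq> {}"
    and edges: "\<And>x y. E x y \<Longrightarrow> x \<in> V \<and> y \<in> V"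
    and symE: "\<And>x y. E x y \<Longrightarrow> E y x"
    and conn: "\<And>x y. x \<in> V \<Longrightarrow> y \<in> V \<Longrightarrow> E\<^sup>*\<^sup>* x y"
    and rank: "inj_on r V"
    and mono: "\<And>v l l'. v \<in> V \<Longrightarrow> l \<le> l' \<Longrightarrow> l' \<le> ecc V E v \<Longrightarrow> f v l \<le> f v l'"
  shows "(\<forall>L. L \<subseteq> V \<longrightarrow>
            (\<exists>u L' q c. msel V E r f L u L' q c) \<and>
            (\<forall>u L' q c. msel V E r f L u L' q c \<longrightarrow>
               u \<in> V \<and> (\<forall>v\<in>V. f u (ecc V E u) \<le> f v (ecc V E v)) \<and>
               eL E L' u = ecc V E u \<and>
               (\<forall>v\<in>V. f u (ecc V E u) \<le> f v (eL E L' v))))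
      \<and> (\<forall>k L' q c. msel_seq V E r f {} k L' q c \<longrightarrow>
            L' \<subseteq> antipode V E r ` V \<and> q = k + 2 * card L' \<and>
            c \<le> (k + 2 * card L') * card V)"
proof (intro conjI allI impI)
  fix L u L' q c
  assume "L \<subseteq> V"
  then show "\<exists>u L' q c. msel V E r f L u L' q c"
    by (rule msel_exists[OF finV neV rank])
  assume call: "msel V E r f L u L' q c"
  have "L' \<subseteq> V"
    using msel_certificate_growth[OF finV neV rank call \<open>L \<subseteq> V\<close>] by blast
  have tight: "u \<in> V" "is_argmin V E f L' u" "eL E L' u = ecc V E u"
    using msel_returns_tight_argmin[OF call] by auto
  then show "u \<in> V" "eL E L' u = ecc V E u"
    "\<forall>v\<in>V. f u (ecc V E u) \<le> f v (eL E L' v)" "\<forall>v\<in>V. f u (ecc V E u) \<le> f v (ecc V E v)"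
    using tight_argmin_minimises[OF finV \<open>L' \<subseteq> V\<close> tight(2,3) mono] by auto
next
  fix k L' q c
  assume "msel_seq V E r f {} k L' q c"
  from msel_seq_cost[OF finV neV rank this]
  show "L' \<subseteq> antipode V E r ` V" "q = k + 2 * card L'" "c \<le> (k + 2 * card L') * card V"
    by auto
qed

end
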